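(* Let $1\le k\le N-1$ satisfy $\phi^{k-1}-\phi^k>\phi^k-\phi^{k+1}$, let $F\in\tilde{\mathcal F}^k$, let $\mathcal U$ be an atom of $\mathfrak A_k$, and set $$\mathcal D=\bigcup_{\beta\in\mathcal N^{in}_{\mathcal U}(F)}\mathcal VT^F_\beta.$$ Then (i) $\mathcal D\cap\mathcal U=\emptyset$; (ii) the sets $\mathcal VT^F_\beta$, $\beta\in\mathcal N^{in}_{\mathcal U}(F)$, are pairwise disjoint; (iii) there is a forest $G\in\tilde{\mathcal F}^k$ such that the arcs leaving the vertices of $\mathcal N\setminus\mathcal D$ are the same in $G$ and $F$, and $\mathcal N^{in}_{\mathcal U}(G)=\emptyset$.
   Context: $V$ is a digraph with vertex set $\mathcal N$, $|\mathcal N|=N$, real arc weights, having at least one spanning tree. An (entering) forest is a digraph in which every vertex has at most one outgoing arc and there is no directed cycle; its weakly connected components are trees, each with a root (the unique vertex with no outgoing arc). For a vertex $\beta$, $T^F_\beta$ is the inclusion-maximal subtree of $F$ rooted at $\beta$, i.e. the subgraph induced by all vertices from which $\beta$ is reachable by a directed path in $F$. $\mathcal F^k$ is the set of spanning forests of $V$ with exactly $k$ trees; $\Upsilon^F$ is total arc weight; $\phi^k=\min_{\mathcal F^k}\Upsilon^F$, $\phi^0=\infty$; $\tilde{\mathcal F}^k$ the forests in $\mathcal F^k$ of weight $\phi^k$. $\mathfrak A_k$ is the algebra of subsets of $\mathcal N$ generated by the vertex sets of trees of forests in $\tilde{\mathcal F}^k$; atoms are its minimal nonempty elements. $\mathcal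 N^{in}_{\mathcal U}(G)$ is the set of tails of arcs of $G$ whose head is in $\mathcal U$ and whose tail is not. *)

theory Defs
  imports "HOL-Analysis.Analysis"
begin

text \<open>A weighted digraph is given by a finite vertex set Nv, an arc set Ar of pairs
  (tail, head) contained in Nv \<times> Nv, and a real weight function w on arcs.\<close>

definition wdigraph :: "'a set \<Rightarrow> ('a \<times> 'a) set \<Rightarrow> bool" where
  "wdigraph Nv Ar \<longleftrightarrow> finite Nv \<and> Ar \<subseteq> Nv \<times> Nv"

definition is_forest :: "('a \<times> 'a) set \<Rightarrow> bool" where
  "is_forest F \<longleftrightarrow> (\<forall>u v v'. (u, v) \<in> F \<longrightarrow> (u, v') \<in> F \<longrightarrow> v = v') \<and> acyclic F"

definition spanning_forest :: "'a set \<Rightarrow> ('a \<times> 'a) set \<Rightarrow> ('a \<times> 'a) set \<Rightarrow> bool" where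
  "spanning_forest Nv Ar F \<longleftrightarrow> F \<subseteq> Ar \<and> is_forest F"

text \<open>Roots: vertices without outgoing arc; each tree has exactly one root.\<close>
definition roots :: "'a set \<Rightarrow> ('a \<times> 'a) set \<Rightarrow> 'a set" where
  "roots Nv F = {v \<in> Nv. \<forall>u. (v, u) \<notin> F}"

definition ntrees :: "'a set \<Rightarrow> ('a \<times> 'a) set \<Rightarrow> nat" where
  "ntrees Nv F = card (roots Nv F)"

definition subtree_verts :: "'a set \<Rightarrow> ('a \<times> 'a) set \<Rightarrow> 'a \<Rightarrow> 'a set" where
  "subtree_verts Nv F \<beta> = {v \<in> Nv. (v, \<beta>) \<in> F\<^sup>*}"

definition forests_k :: "'a set \<Rightarrow> ('a \<times> 'a) set \<Rightarrow> nat \<Rightarrow> ('a \<times> 'a) set set" where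
  "forests_k Nv Ar k = {F. spanning_forest Nv Ar F \<and> ntrees Nv F = k}"

definition weight :: "('a \<times> 'a \<Rightarrow> real) \<Rightarrow> ('a \<times> 'a) set \<Rightarrow> real" where
  "weight w F = (\<Sum>e\<in>F. w e)"

definition phi :: "'a set \<Rightarrow> ('a \<times> 'a) set \<Rightarrow> ('a \<times> 'a \<Rightarrow> real) \<Rightarrow> nat \<Rightarrow> ereal" where
  "phi Nv Ar w k = (if k = 0 then \<infinity> else ereal (Min (weight w ` forests_k Nv Ar k)))"

definition opt_forests :: "'a set \<Rightarrow> ('a \<times> 'a) set \<Rightarrow> ('a \<times> 'a \<Rightarrow> real) \<Rightarrow> nat \<Rightarrow> ('a \<times> 'a) set set" where
  "opt_forests Nv Ar w k = {F \<in> forests_k Nv Ar k. ereal (weight w F) = phi Nv Ar w k}"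

definition tree_vertex_sets :: "'a set \<Rightarrow> ('a \<times> 'a) set \<Rightarrow> 'a set set" where
  "tree_vertex_sets Nv F = subtree_verts Nv F ` roots Nv F"

definition gen_algebra :: "'a set \<Rightarrow> 'a set set \<Rightarrow> 'a set set" where
  "gen_algebra Nv G = \<Inter>{M. algebra Nv M \<and> G \<subseteq> M}"

definition alg_k :: "'a set \<Rightarrow> ('a \<times> 'a) set \<Rightarrow> ('a \<times> 'a \<Rightarrow> real) \<Rightarrow> nat \<Rightarrow> 'a set set" where
  "alg_k Nv Ar w k = gen_algebra Nv (\<Union>F\<in>opt_forests Nv Ar w k. tree_vertex_sets Nv F)"

definition is_atom :: "'a set set \<Rightarrow> 'a set \<Rightarrow> bool" where
  "is_atom M U \<longleftrightarrow> U \<in> M \<and> U \<noteq> {} \<and> (\<forall>V\<in>M. V \<noteq> {} \<longrightarrow> V \<subseteq> U \<longrightarrow> V = U)"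

definition in_tails :: "'a set \<Rightarrow> ('a \<times> 'a) set \<Rightarrow> 'a set" where
  "in_tails U G = {u. \<exists>v. (u, v) \<in> G \<and> v \<in> U \<and> u \<notin> U}"

definition out_arcs :: "('a \<times> 'a) set \<Rightarrow> 'a \<Rightarrow> ('a \<times> 'a) set" where
  "out_arcs G v = {e \<in> G. fst e = v}"

end

theory Submission
  imports Defs
begin

text \<open>
  The proof rests on an exchange argument. For optimal forests \<open>F\<close>, \<open>H\<close> and a vertex set
  \<open>X\<close>, swapping the outgoing arcs of \<open>X\<close> between \<open>F\<close> and \<open>H\<close> gives two arc sets of total
  weight \<open>2 \<phi>\<^sup>k\<close>; if both are forests with \<open>k + h\<close> and \<open>k - h\<close> trees, \<open>h \<le> 1\<close>, then the gap
  \<open>\<phi>\<^sup>k\<^sup>-\<^sup>1 - \<phi>\<^sup>k > \<phi>\<^sup>k - \<phi>\<^sup>k\<^sup>+\<^sup>1\<close> forces \<open>h = 0\<close> and both are optimal again.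

  As \<open>U\<close> is an atom, it lies in one tree of every optimal forest, and every vertex outside
  \<open>U\<close> is separated from \<open>U\<close> by some optimal forest. Exchanging with such a forest on the
  subtree of an in-tail \<open>\<beta>\<close> removes \<beta> from \<open>\<N>\<^sup>i\<^sup>n\<^sub>U\<close> and changes arcs only inside the
  subtree of \<open>\<beta>\<close> and off \<open>U\<close>; iterating gives (iii). In an optimal forest without in-tails
  a further exchange shows that \<open>U\<close> has at most one exit (a vertex of \<open>U\<close> without arc into
  \<open>U\<close>), and this transfers to \<open>F\<close>, which agrees with such a forest on \<open>U\<close>. A vertex of \<open>U\<close>
  in the subtree of an in-tail would leave \<open>U\<close> through that exit and return to it through
  the in-tail, closing a cycle; this is (i), and (ii) follows from (i).
\<close>

section \<open>Forests as relations\<close>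

lemma is_forest_iff: "is_forest F \<longleftrightarrow> single_valued F \<and> acyclic F"
  unfolding is_forest_def single_valued_def by blast

lemma roots_eq: "roots Nv F = Nv - Domain F"
  unfolding roots_def by blast

lemma mem_subtree_verts [simp]: "v \<in> subtree_verts Nv F b \<longleftrightarrow> v \<in> Nv \<and> (v, b) \<in> F\<^sup>*"
  unfolding subtree_verts_def by blast

lemma rtrancl_from_sink: "r \<notin> Domain F \<Longrightarrow> (r, s) \<in> F\<^sup>* \<Longrightarrow> s = r"
  by (metis DomainI converse_rtranclE)

lemma rtrancl_leaves_set:
  assumes "(z, b) \<in> R\<^sup>*" "z \<in> S" "b \<notin> S"
  shows "\<exists>t t'. (z, t) \<in> R\<^sup>* \<and> (t, t') \<in> R \<and> t \<in> S \<and> t' \<notin> S \<and> (t', b) \<in> R\<^sup>*"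
  using assms
proof (induction rule: converse_rtrancl_induct)
  case (step z y)
  show ?case
  proof (cases "y \<in> S")
    case True
    with step obtain t t' where "(y, t) \<in> R\<^sup>*" "(t, t') \<in> R" "t \<in> S" "t' \<notin> S" "(t', b) \<in> R\<^sup>*"
      by blast
    with step.hyps(1) show ?thesis by (meson converse_rtrancl_into_rtrancl)
  next
    case False
    with step show ?thesis by blast
  qed
qed simp

lemma finite_acyclic_maximal_reachable:
  assumes "finite R" "acyclic R" "x \<in> S"
  shows "\<exists>m\<in>S. (x, m) \<in> R\<^sup>* \<and> (\<forall>t\<in>S. (m, t) \<notin> R\<^sup>+)"
proof -
  have "wf ((R\<^sup>+)\<inverse>)"
    using finite_acyclic_wf_converse[OF assms(1,2)] by (simp add: wf_trancl flip: trancl_converse)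
  moreover have "x \<in> {m \<in> S. (x, m) \<in> R\<^sup>*}" using assms(3) by simp
  ultimately obtain m where m: "m \<in> S" "(x, m) \<in> R\<^sup>*"
    and max: "\<And>t. (t, m) \<in> (R\<^sup>+)\<inverse> \<Longrightarrow> t \<notin> {m \<in> S. (x, m) \<in> R\<^sup>*}"
    by (rule wfE_min) blast
  have "(m, t) \<notin> R\<^sup>+" if "t \<in> S" for t
    using max[of t] that m(2) by (auto dest: trancl_into_rtrancl intro: rtrancl_trans)
  with m show ?thesis by blast
qed

lemma trancl_stays_outside:
  assumes closed: "\<And>x y. (x, y) \<in> R \<Longrightarrow> x \<notin> S \<Longrightarrow> y \<notin> S"
    and "(x, y) \<in> R\<^sup>+" "x \<notin> S"
  shows "(x, y) \<in> (Restr R (- S))\<^sup>+"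
proof -
  have "y \<notin> S \<and> (x, y) \<in> (Restr R (- S))\<^sup>+"
    using assms(2)
  proof (induction rule: trancl_induct)
    case (base y)
    then show ?case using closed \<open>x \<notin> S\<close> by blast
  next
    case (step y z)
    then show ?case using closed by (blast intro: trancl_into_trancl)
  qed
  then show ?thesis ..
qed

lemma acyclic_cut:
  assumes closed: "\<And>x y. (x, y) \<in> R \<Longrightarrow> x \<notin> S \<Longrightarrow> y \<notin> S"
    and inside: "acyclic (Restr R S)" and outside: "acyclic (Restr R (- S))"
  shows "acyclic R"
proof (rule acyclicI, intro allI notI)
  fix v assume cycle: "(v, v) \<in> R\<^sup>+"
  show False
  proof (cases "v \<in> S")
    case False
    have "(v, v) \<in> (Restr R (- S))\<^sup>+"
      by (rule trancl_stays_outside[of R S]) (use closed cycle False in auto)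
    with outside show False unfolding acyclic_def by blast
  next
    case True
    have "(v, v) \<in> (R\<inverse>)\<^sup>+" using cycle by (simp add: trancl_converse)
    moreover have "y \<notin> - S" if "(x, y) \<in> R\<inverse>" "x \<notin> - S" for x y
      using closed that by blast
    ultimately have "(v, v) \<in> (Restr (R\<inverse>) (- (- S)))\<^sup>+"
      using trancl_stays_outside[of "R\<inverse>" "- S"] True by blast
    moreover have "Restr (R\<inverse>) (- (- S)) = (Restr R S)\<inverse>" by auto
    ultimately have "(v, v) \<in> ((Restr R S)\<inverse>)\<^sup>+" by simp
    with inside show False by (simp add: acyclic_def trancl_converse)
  qed
qed

text \<open>For a finite forest this is the root of the tree containing \<open>v\<close>; for other relations the
  description may fail and the value is arbitrary.\<close>

definition root_of :: "('a \<times> 'a) set \<Rightarrow> 'a \<Rightarrow> 'a" where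
  "root_of F v = (THE r. (v, r) \<in> F\<^sup>* \<and> r \<notin> Domain F)"

locale finite_forest =
  fixes F :: "('a \<times> 'a) set"
  assumes finite_arcs: "finite F" and forest: "is_forest F"
begin

lemma single_valued_arcs: "single_valued F" and acyclic_arcs: "acyclic F"
  using forest by (simp_all add: is_forest_iff)

lemma reaches_sink: "\<exists>r. (v, r) \<in> F\<^sup>* \<and> r \<notin> Domain F"
  using finite_acyclic_maximal_reachable[OF finite_arcs acyclic_arcs, of v UNIV]
  by (metis DomainE UNIV_I r_into_trancl')

lemma root_of_eqI:
  assumes "(v, r) \<in> F\<^sup>*" "r \<notin> Domain F"
  shows "root_of F v = r"
  unfolding root_of_def
proof (rule the_equality)
  fix r' assume "(v, r') \<in> F\<^sup>* \<and> r' \<notin> Domain F"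
  then show "r' = r"
    using single_valued_confluent[OF single_valued_arcs assms(1)] assms rtrancl_from_sink by metis
qed (use assms in blast)

lemma root_of_path: "(v, root_of F v) \<in> F\<^sup>*"
  and root_of_not_Domain: "root_of F v \<notin> Domain F"
  using reaches_sink[of v] root_of_eqI by metis+

lemma root_of_rtrancl: "(v, u) \<in> F\<^sup>* \<Longrightarrow> root_of F v = root_of F u"
  by (meson root_of_eqI root_of_not_Domain root_of_path rtrancl_trans)

lemma root_of_arc: "(v, u) \<in> F \<Longrightarrow> root_of F v = root_of F u"
  by (simp add: root_of_rtrancl r_into_rtrancl)

lemma root_of_sink: "v \<notin> Domain F \<Longrightarrow> root_of F v = v"
  by (simp add: root_of_eqI)

lemma rtrancl_via_successor: "(v, b) \<in> F\<^sup>* \<Longrightarrow> v \<noteq> b \<Longrightarrow> (v, u) \<in> F \<Longrightarrow> (u, b) \<in> F\<^sup>*"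
  by (metis converse_rtranclE single_valuedD single_valued_arcs)

lemma no_path_back: "(v, u) \<in> F \<Longrightarrow> (u, v) \<notin> F\<^sup>*"
  using acyclic_arcs by (meson acyclic_def rtrancl_into_trancl2)

lemma root_of_in_roots:
  assumes "F \<subseteq> Nv \<times> Nv" "v \<in> Nv"
  shows "root_of F v \<in> roots Nv F"
  using root_of_path[of v] assms root_of_not_Domain
  by (auto simp: roots_eq elim: rtranclE)

end

lemma out_arcs_eq_iff: "out_arcs K v = out_arcs F v \<longleftrightarrow> (\<forall>u. (v, u) \<in> K \<longleftrightarrow> (v, u) \<in> F)"
proof
  assume "out_arcs K v = out_arcs F v"
  then show "\<forall>u. (v, u) \<in> K \<longleftrightarrow> (v, u) \<in> F"
    unfolding out_arcs_def by (metis (mono_tags, lifting) fst_conv mem_Collect_eq)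
next
  assume "\<forall>u. (v, u) \<in> K \<longleftrightarrow> (v, u) \<in> F"
  then show "out_arcs K v = out_arcs F v"
    unfolding out_arcs_def by auto
qed

lemma root_of_agree:
  assumes F: "finite_forest F" and K: "finite_forest K"
    and agree: "\<And>z. (v, z) \<in> F\<^sup>* \<Longrightarrow> out_arcs K z = out_arcs F z"
  shows "root_of K v = root_of F v"
proof -
  interpret F: finite_forest F by (rule F)
  interpret K: finite_forest K by (rule K)
  have arcs: "(z, u) \<in> K \<longleftrightarrow> (z, u) \<in> F" if "(v, z) \<in> F\<^sup>*" for z u
    using agree[OF that] by (simp add: out_arcs_eq_iff)
  have "(v, z) \<in> K\<^sup>*" if "(v, z) \<in> F\<^sup>*" for z
    using that by (induction rule: rtrancl_induct) (auto intro: rtrancl_into_rtrancl simp: arcs)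
  moreover have "root_of F v \<notin> Domain K"
    using F.root_of_not_Domain arcs[OF F.root_of_path] by blast
  ultimately show ?thesis using K.root_of_eqI F.root_of_path by blast
qed

lemma in_tails_empty_rtrancl:
  assumes "in_tails U G = {}" "(a, z) \<in> G\<^sup>*" "z \<in> U"
  shows "a \<in> U"
  using assms(2,3)
  by (induction rule: converse_rtrancl_induct) (use assms(1) in \<open>auto simp: in_tails_def\<close>)

lemma rtrancl_avoids_subtrees:
  assumes FN: "F \<subseteq> Nv \<times> Nv"
    and agree: "\<And>v u. v \<notin> (\<Union>\<beta>\<in>B. subtree_verts Nv F \<beta>) \<Longrightarrow> (v, u) \<in> K \<Longrightarrow> (v, u) \<in> F"
    and "(v, z) \<in> K\<^sup>*" "v \<notin> (\<Union>\<beta>\<in>B. subtree_verts Nv F \<beta>)"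
  shows "z \<notin> (\<Union>\<beta>\<in>B. subtree_verts Nv F \<beta>)"
  using assms(3)
proof (induction rule: rtrancl_induct)
  case base
  show ?case by fact
next
  case (step y z)
  then have "(y, z) \<in> F" using agree by blast
  with FN step.IH show ?case by (auto intro: converse_rtrancl_into_rtrancl)
qed

lemma (in finite_forest) root_of_outside_in_tail_free:
  "in_tails U F = {} \<Longrightarrow> y \<notin> U \<Longrightarrow> root_of F y \<notin> U"
  using in_tails_empty_rtrancl root_of_path by metis

lemma subtree_within_subtrees:
  assumes FN: "F \<subseteq> Nv \<times> Nv" and "\<beta> \<in> B" "\<beta> \<in> Nv"
    and agree: "\<And>v u. v \<notin> (\<Union>\<beta>\<in>B. subtree_verts Nv F \<beta>) \<Longrightarrow> (v, u) \<in> K \<Longrightarrow> (v, u) \<in> F"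
  shows "subtree_verts Nv K \<beta> \<subseteq> (\<Union>\<beta>\<in>B. subtree_verts Nv F \<beta>)"
proof
  fix v assume "v \<in> subtree_verts Nv K \<beta>"
  then have "(v, \<beta>) \<in> K\<^sup>*" by simp
  moreover have "\<beta> \<in> (\<Union>\<beta>\<in>B. subtree_verts Nv F \<beta>)" using assms(2,3) by auto
  ultimately show "v \<in> (\<Union>\<beta>\<in>B. subtree_verts Nv F \<beta>)"
    using rtrancl_avoids_subtrees[of F Nv B K, OF FN agree] by blast
qed

lemma (in finite_forest) subtrees_of_leaving_disjoint:
  assumes "in_tails U F = {}" and "u1 \<in> U" "(u1, y1) \<in> F" "y1 \<notin> U"
    and "u2 \<in> U" "(u2, y2) \<in> F" "y2 \<notin> U" and "u1 \<noteq> u2"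
  shows "subtree_verts Nv F u1 \<inter> subtree_verts Nv F u2 = {}"
proof (rule ccontr)
  assume "subtree_verts Nv F u1 \<inter> subtree_verts Nv F u2 \<noteq> {}"
  then obtain v where "(v, u1) \<in> F\<^sup>*" "(v, u2) \<in> F\<^sup>*" by auto
  then have "(u1, u2) \<in> F\<^sup>* \<or> (u2, u1) \<in> F\<^sup>*"
    by (rule single_valued_confluent[OF single_valued_arcs])
  then show False
  proof
    assume "(u1, u2) \<in> F\<^sup>*"
    then have "(y1, u2) \<in> F\<^sup>*" using assms(8) assms(3) by (rule rtrancl_via_successor)
    with assms(4) show False using in_tails_empty_rtrancl[OF assms(1) _ assms(5)] by blast
  next
    assume "(u2, u1) \<in> F\<^sup>*"
    then have "(y2, u1) \<in> F\<^sup>*" using assms(8)[symmetric] assms(6) by (rule rtrancl_via_successor)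
    with assms(7) show False using in_tails_empty_rtrancl[OF assms(1) _ assms(2)] by blast
  qed
qed

definition exits :: "'a set \<Rightarrow> ('a \<times> 'a) set \<Rightarrow> 'a set" where
  "exits U G = {u \<in> U. \<forall>w\<in>U. (u, w) \<notin> G}"

section \<open>Exchanging out-arcs between forests\<close>

definition graft :: "('a \<times> 'a) set \<Rightarrow> ('a \<times> 'a) set \<Rightarrow> 'a set \<Rightarrow> ('a \<times> 'a) set" where
  "graft F H X = {e \<in> F. fst e \<notin> X} \<union> {e \<in> H. fst e \<in> X}"

lemma graft_iff: "(a, b) \<in> graft F H X \<longleftrightarrow> (if a \<in> X then (a, b) \<in> H else (a, b) \<in> F)"
  unfolding graft_def by auto

lemma single_valued_graft: "single_valued F \<Longrightarrow> single_valued H \<Longrightarrow> single_valued (graft F H X)"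
  unfolding single_valued_def graft_iff by metis

lemma acyclic_graft:
  assumes "acyclic F" "acyclic H" "\<And>x y. (x, y) \<in> F \<Longrightarrow> x \<notin> X \<Longrightarrow> y \<notin> X"
  shows "acyclic (graft F H X)"
proof (rule acyclic_cut[where S = X])
  show "acyclic (Restr (graft F H X) X)"
    by (rule acyclic_subset[OF assms(2)]) (auto simp: graft_def)
  show "acyclic (Restr (graft F H X) (- X))"
    by (rule acyclic_subset[OF assms(1)]) (auto simp: graft_def)
qed (use assms(3) in \<open>auto simp: graft_iff\<close>)

lemma out_arcs_graft: "out_arcs (graft F H X) v = (if v \<in> X then out_arcs H v else out_arcs F v)"
  unfolding out_arcs_def graft_def by auto

lemma graft_subset: "graft F H X \<subseteq> F \<union> H"
  unfolding graft_def by auto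

lemma spanning_forest_graft:
  assumes "spanning_forest Nv Ar F" "spanning_forest Nv Ar H" "acyclic (graft F H X)"
  shows "spanning_forest Nv Ar (graft F H X)"
proof -
  have "graft F H X \<subseteq> Ar"
    using assms(1,2) graft_subset[of F H X] unfolding spanning_forest_def by blast
  moreover have "single_valued (graft F H X)"
    using assms(1,2) single_valued_graft unfolding spanning_forest_def is_forest_iff by blast
  ultimately show ?thesis
    using assms(3) unfolding spanning_forest_def is_forest_iff by blast
qed

lemma roots_graft: "roots Nv (graft F H X) = (roots Nv F - X) \<union> (roots Nv H \<inter> X)"
  unfolding roots_def graft_iff by auto

lemma card_roots_graft:
  assumes "finite Nv" "roots Nv F \<inter> X = {}"
  shows "card (roots Nv (graft F H X)) = card (roots Nv F) + card (roots Nv H \<inter> X)"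
    and "card (roots Nv (graft H F X)) + card (roots Nv H \<inter> X) = card (roots Nv H)"
proof -
  have fin: "finite (roots Nv F)" "finite (roots Nv H)"
    using assms(1) by (simp_all add: roots_def)
  have "roots Nv (graft F H X) = roots Nv F \<union> (roots Nv H \<inter> X)"
    by (simp add: roots_graft Diff_triv assms(2))
  moreover have "roots Nv F \<inter> (roots Nv H \<inter> X) = {}"
    using assms(2) by blast
  ultimately show "card (roots Nv (graft F H X)) = card (roots Nv F) + card (roots Nv H \<inter> X)"
    using fin by (simp add: card_Un_disjoint)
  have "roots Nv (graft H F X) = roots Nv H - X"
    by (simp add: roots_graft assms(2))
  then show "card (roots Nv (graft H F X)) + card (roots Nv H \<inter> X) = card (roots Nv H)"
    using card_Int_Diff[OF fin(2), of X] by simp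
qed

lemma weight_graft:
  assumes "finite F" "finite H"
  shows "weight w (graft F H X) + weight w (graft H F X) = weight w F + weight w H"
proof -
  define P :: "('a \<times> 'a) set" where "P = {e. fst e \<in> X}"
  have split: "weight w A = weight w (A \<inter> P) + weight w (A - P)" if "finite A" for A
    unfolding weight_def using that by (rule sum.Int_Diff)
  have union: "weight w ((A - P) \<union> (B \<inter> P)) = weight w (A - P) + weight w (B \<inter> P)"
    if "finite A" "finite B" for A B
    unfolding weight_def by (rule sum.union_disjoint) (use that in auto)
  have "graft F H X = (F - P) \<union> (H \<inter> P)" "graft H F X = (H - P) \<union> (F \<inter> P)"
    unfolding graft_def P_def by auto
  then show ?thesis
    using union[OF assms] union[OF assms(2,1)] split[OF assms(1)] split[OF assms(2)] by simp
qed

lemma acyclic_graft_subtree: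
  fixes b :: 'a
  assumes F: "finite_forest F" and H: "finite_forest H" and FN: "F \<subseteq> Nv \<times> Nv"
  defines "X \<equiv> subtree_verts Nv F b \<inter> {v. root_of H v = root_of H b}"
  shows "acyclic (graft F H X)"
proof -
  interpret F: finite_forest F by (rule F)
  interpret H: finite_forest H by (rule H)
  define T where "T = subtree_verts Nv F b"
  have X_eq: "X = T \<inter> {v. root_of H v = root_of H b}"
    unfolding X_def T_def ..
  show ?thesis
  proof (rule acyclic_cut[where S = T])
    fix x y assume xy: "(x, y) \<in> graft F H X" and x: "x \<notin> T"
    then have xyF: "(x, y) \<in> F" by (simp add: graft_iff X_eq)
    show "y \<notin> T"
    proof
      assume "y \<in> T"
      with xyF have "(x, b) \<in> F\<^sup>*" by (simp add: T_def converse_rtrancl_into_rtrancl)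
      with xyF FN x show False by (auto simp: T_def)
    qed
  next
    show "acyclic (Restr (graft F H X) T)"
    proof (rule acyclic_cut[where S = "T - X"])
      fix x y assume xy: "(x, y) \<in> Restr (graft F H X) T" and x: "x \<notin> T - X"
      then have "x \<in> X" "(x, y) \<in> H" "y \<in> T" by (auto simp: graft_iff)
      then show "y \<notin> T - X"
        using H.root_of_arc[of x y] by (simp add: X_eq)
    next
      show "acyclic (Restr (Restr (graft F H X) T) (T - X))"
        by (rule acyclic_subset[OF F.acyclic_arcs]) (auto simp: graft_def)
      show "acyclic (Restr (Restr (graft F H X) T) (- (T - X)))"
        by (rule acyclic_subset[OF H.acyclic_arcs]) (auto simp: graft_def)
    qed
  next
    show "acyclic (Restr (graft F H X) (- T))"
      by (rule acyclic_subset[OF F.acyclic_arcs]) (auto simp: graft_def X_eq)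
  qed
qed

lemma acyclic_graft_subtree_swap:
  assumes F: "finite_forest F" and H: "finite_forest H" and FN: "F \<subseteq> Nv \<times> Nv"
    and bc: "(b, c) \<in> F" and sep: "root_of H c \<noteq> root_of H b"
  defines "X \<equiv> subtree_verts Nv F b \<inter> {v. root_of H v = root_of H b}"
  shows "acyclic (graft H F X)"
proof -
  interpret F: finite_forest F by (rule F)
  interpret H: finite_forest H by (rule H)
  define Q where "Q = {v. root_of H v = root_of H b}"
  have X_eq: "X = subtree_verts Nv F b \<inter> Q"
    unfolding X_def Q_def ..
  show ?thesis
  proof (rule acyclic_cut[where S = Q])
    fix x y assume "(x, y) \<in> graft H F X" "x \<notin> Q"
    then have "(x, y) \<in> H" "x \<notin> Q" by (simp_all add: graft_iff X_eq)
    then show "y \<notin> Q" using H.root_of_arc[of x y] by (simp add: Q_def)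
  next
    show "acyclic (Restr (graft H F X) Q)"
    proof (rule acyclic_cut[where S = "Q - X"])
      fix x y assume xy: "(x, y) \<in> Restr (graft H F X) Q" "x \<notin> Q - X"
      then have x: "x \<in> X" and xyF: "(x, y) \<in> F" and y: "y \<in> Q" by (auto simp: graft_iff)
      have "x \<noteq> b"
      proof
        assume "x = b"
        with xyF bc F.single_valued_arcs have "y = c" by (simp add: single_valuedD)
        with y sep show False by (simp add: Q_def)
      qed
      with x xyF have "(y, b) \<in> F\<^sup>*"
        using F.rtrancl_via_successor[of x b y] by (simp add: X_eq)
      moreover have "y \<in> Nv" using xyF FN by blast
      ultimately show "y \<notin> Q - X" using y by (simp add: X_eq)
    next
      show "acyclic (Restr (Restr (graft H F X) Q) (Q - X))"
        by (rule acyclic_subset[OF H.acyclic_arcs]) (auto simp: graft_def)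
      show "acyclic (Restr (Restr (graft H F X) Q) (- (Q - X)))"
        by (rule acyclic_subset[OF F.acyclic_arcs]) (auto simp: graft_def)
    qed
  next
    show "acyclic (Restr (graft H F X) (- Q))"
      by (rule acyclic_subset[OF H.acyclic_arcs]) (auto simp: graft_def X_eq)
  qed
qed

section \<open>The algebra generated by optimal trees\<close>

lemma algebra_alg_k: "algebra Nv (alg_k Nv Ar w k)"
proof -
  let ?Ms = "{M. algebra Nv M \<and> (\<Union>F\<in>opt_forests Nv Ar w k. tree_vertex_sets Nv F) \<subseteq> M}"
  have "Pow Nv \<in> ?Ms"
    using algebra_Pow[of Nv] by (auto simp: tree_vertex_sets_def subtree_verts_def)
  then have Pow: "\<Inter>?Ms \<subseteq> Pow Nv" by (rule Inter_lower)
  have closed: "{} \<in> M" "a \<in> M \<Longrightarrow> Nv - a \<in> M" "a \<in> M \<Longrightarrow> b \<in> M \<Longrightarrow> a \<union> b \<in> M"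
    if "M \<in> ?Ms" for M a b
  proof -
    from that interpret algebra Nv M by simp
    show "{} \<in> M" "a \<in> M \<Longrightarrow> Nv - a \<in> M" "a \<in> M \<Longrightarrow> b \<in> M \<Longrightarrow> a \<union> b \<in> M"
      by auto
  qed
  show ?thesis
    unfolding alg_k_def gen_algebra_def
  proof (rule algebra_iff_Un[THEN iffD2], intro conjI ballI)
    show "{} \<in> \<Inter>?Ms" using closed(1) by blast
    show "Nv - a \<in> \<Inter>?Ms" if "a \<in> \<Inter>?Ms" for a
      using closed(2) that by blast
    show "a \<union> b \<in> \<Inter>?Ms" if "a \<in> \<Inter>?Ms" "b \<in> \<Inter>?Ms" for a b
      using closed(3) that by blast
  qed (rule Pow)
qed

lemma subtree_in_alg_k:
  assumes "G \<in> opt_forests Nv Ar w k" "r \<in> roots Nv G"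
  shows "subtree_verts Nv G r \<in> alg_k Nv Ar w k"
  unfolding alg_k_def gen_algebra_def
proof (rule InterI)
  have "subtree_verts Nv G r \<in> tree_vertex_sets Nv G"
    using assms(2) by (simp add: tree_vertex_sets_def)
  then show "subtree_verts Nv G r \<in> M"
    if "M \<in> {M. algebra Nv M \<and> (\<Union>F\<in>opt_forests Nv Ar w k. tree_vertex_sets Nv F) \<subseteq> M}" for M
    using that assms(1) by blast
qed

lemma alg_k_least:
  assumes "algebra Nv M"
    and "\<And>G r. G \<in> opt_forests Nv Ar w k \<Longrightarrow> r \<in> roots Nv G \<Longrightarrow> subtree_verts Nv G r \<in> M"
  shows "alg_k Nv Ar w k \<subseteq> M"
  unfolding alg_k_def gen_algebra_def
proof (rule Inter_lower, intro CollectI conjI)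
  show "(\<Union>F\<in>opt_forests Nv Ar w k. tree_vertex_sets Nv F) \<subseteq> M"
    using assms(2) by (auto simp: tree_vertex_sets_def)
qed (rule assms(1))

section \<open>Optimal forests and the gap\<close>

locale gap_setting =
  fixes Nv :: "'a set" and Ar :: "('a \<times> 'a) set" and w :: "'a \<times> 'a \<Rightarrow> real" and k :: nat
  assumes wdigraph: "wdigraph Nv Ar" and k_pos: "1 \<le> k" and Nv_nonempty: "Nv \<noteq> {}"
    and gap: "phi Nv Ar w (k - 1) - phi Nv Ar w k > phi Nv Ar w k - phi Nv Ar w (k + 1)"
begin

abbreviation opt :: "('a \<times> 'a) set set" where
  "opt \<equiv> opt_forests Nv Ar w k"

lemma finite_Nv: "finite Nv" and Ar_subset: "Ar \<subseteq> Nv \<times> Nv"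
  using wdigraph by (simp_all add: wdigraph_def)

lemma finite_Ar: "finite Ar"
  using finite_subset[OF Ar_subset] finite_Nv by simp

lemma finite_forests_k: "finite (forests_k Nv Ar j)"
proof (rule finite_subset)
  show "forests_k Nv Ar j \<subseteq> Pow Ar"
    by (auto simp: forests_k_def spanning_forest_def)
qed (simp add: finite_Ar)

definition min_weight :: "nat \<Rightarrow> real" where
  "min_weight j = Min (weight w ` forests_k Nv Ar j)"

lemma phi_eq_min_weight: "j \<noteq> 0 \<Longrightarrow> phi Nv Ar w j = ereal (min_weight j)"
  by (simp add: phi_def min_weight_def)

lemma min_weight_le: "K \<in> forests_k Nv Ar j \<Longrightarrow> min_weight j \<le> weight w K"
  by (simp add: min_weight_def finite_forests_k)

lemma opt_iff: "K \<in> opt \<longleftrightarrow> K \<in> forests_k Nv Ar k \<and> weight w K = min_weight k"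
  using k_pos by (simp add: opt_forests_def phi_eq_min_weight)

lemma finite_forest_if_spanning: "spanning_forest Nv Ar F \<Longrightarrow> finite_forest F"
  unfolding spanning_forest_def finite_forest_def using finite_Ar finite_subset by blast

lemma opt_spanning_forest: "F \<in> opt \<Longrightarrow> spanning_forest Nv Ar F"
  by (simp add: opt_iff forests_k_def)

lemma opt_finite_forest: "F \<in> opt \<Longrightarrow> finite_forest F"
  by (simp add: opt_spanning_forest finite_forest_if_spanning)

lemma opt_subset: "F \<in> opt \<Longrightarrow> F \<subseteq> Nv \<times> Nv"
  using opt_spanning_forest Ar_subset unfolding spanning_forest_def by blast

lemma opt_card_roots: "F \<in> opt \<Longrightarrow> card (roots Nv F) = k"
  by (simp add: opt_iff forests_k_def ntrees_def)

lemma spanning_forest_roots_nonempty: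
  assumes "spanning_forest Nv Ar F"
  shows "roots Nv F \<noteq> {}"
proof -
  obtain v where "v \<in> Nv" using Nv_nonempty by blast
  moreover have "F \<subseteq> Nv \<times> Nv" using assms Ar_subset unfolding spanning_forest_def by blast
  ultimately show ?thesis
    using finite_forest.root_of_in_roots[OF finite_forest_if_spanning[OF assms]] by blast
qed

text \<open>The gap hypothesis is a strict convexity of \<open>min_weight\<close> at \<open>k\<close>: two forests with
  \<open>k + 1\<close> and \<open>k - 1\<close> trees weigh strictly more than two optimal ones.\<close>

lemma graft_opt_if_tree_counts:
  assumes F: "F \<in> opt" and H: "H \<in> opt"
    and acyclic: "acyclic (graft F H X)" "acyclic (graft H F X)"
    and counts: "card (roots Nv (graft F H X)) = k + h" "card (roots Nv (graft H F X)) + h = k"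
    and "h \<le> 1"
  shows "graft F H X \<in> opt \<and> graft H F X \<in> opt"
proof -
  let ?K = "graft F H X" and ?L = "graft H F X"
  have sf: "spanning_forest Nv Ar ?K" "spanning_forest Nv Ar ?L"
    using spanning_forest_graft opt_spanning_forest F H acyclic by blast+
  have "finite F" "finite H"
    using opt_finite_forest[OF F] opt_finite_forest[OF H] finite_forest.finite_arcs by blast+
  then have sum: "weight w ?K + weight w ?L = 2 * min_weight k"
    using weight_graft[of F H w X] F H by (simp add: opt_iff)
  have "h = 0"
  proof (rule ccontr)
    assume "h \<noteq> 0"
    with \<open>h \<le> 1\<close> have h: "h = 1" by simp
    have "card (roots Nv ?L) \<noteq> 0"
      using spanning_forest_roots_nonempty[OF sf(2)] finite_Nv by (simp add: roots_def)
    with counts(2) h have "k - 1 \<noteq> 0" by simp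
    with gap have "min_weight (k - 1) - min_weight k > min_weight k - min_weight (k + 1)"
      using k_pos by (simp add: phi_eq_min_weight)
    moreover have "?K \<in> forests_k Nv Ar (k + 1)" "?L \<in> forests_k Nv Ar (k - 1)"
      using sf counts h by (simp_all add: forests_k_def ntrees_def)
    then have "min_weight (k + 1) \<le> weight w ?K" "min_weight (k - 1) \<le> weight w ?L"
      by (simp_all add: min_weight_le)
    ultimately show False using sum by linarith
  qed
  then have "?K \<in> forests_k Nv Ar k" "?L \<in> forests_k Nv Ar k"
    using sf counts by (simp_all add: forests_k_def ntrees_def)
  with sum show ?thesis
    using min_weight_le[of ?K k] min_weight_le[of ?L k] by (simp add: opt_iff)
qed

lemma graft_pair_opt:
  assumes F: "F \<in> opt" and H: "H \<in> opt"
    and acyclic: "acyclic (graft F H X)" "acyclic (graft H F X)"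
    and roots: "roots Nv F \<inter> X = {}" "roots Nv H \<inter> X \<subseteq> {r}"
  shows "graft F H X \<in> opt \<and> graft H F X \<in> opt"
proof (rule graft_opt_if_tree_counts[OF F H acyclic])
  show "card (roots Nv H \<inter> X) \<le> 1"
    using card_mono[OF _ roots(2)] by simp
  show "card (roots Nv (graft F H X)) = k + card (roots Nv H \<inter> X)"
    using card_roots_graft(1)[OF finite_Nv roots(1)] opt_card_roots[OF F] by simp
  show "card (roots Nv (graft H F X)) + card (roots Nv H \<inter> X) = k"
    using card_roots_graft(2)[OF finite_Nv roots(1)] opt_card_roots[OF H] by simp
qed

lemma graft_subtree_opt:
  assumes F: "F \<in> opt" and H: "H \<in> opt" and bc: "(b, c) \<in> F"
    and sep: "root_of H c \<noteq> root_of H b"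
  defines "X \<equiv> subtree_verts Nv F b \<inter> {v. root_of H v = root_of H b}"
  shows "graft F H X \<in> opt \<and> graft H F X \<in> opt"
proof (rule graft_pair_opt[OF F H])
  note forests = opt_finite_forest[OF F] opt_finite_forest[OF H] opt_subset[OF F]
  show "acyclic (graft F H X)"
    unfolding X_def by (rule acyclic_graft_subtree[OF forests])
  show "acyclic (graft H F X)"
    unfolding X_def by (rule acyclic_graft_subtree_swap[OF forests bc sep])
  show "roots Nv F \<inter> X = {}"
  proof (rule ccontr)
    assume "roots Nv F \<inter> X \<noteq> {}"
    then obtain v where "v \<notin> Domain F" "(v, b) \<in> F\<^sup>*"
      by (auto simp: roots_eq X_def)
    then have "b \<notin> Domain F" using rtrancl_from_sink by metis
    with bc show False by blast
  qed
  show "roots Nv H \<inter> X \<subseteq> {root_of H b}"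
    using finite_forest.root_of_sink[OF forests(2)] by (auto simp: roots_eq X_def)
qed

end

section \<open>Atoms\<close>

locale atom_setting = gap_setting +
  fixes U :: "'a set"
  assumes atom: "is_atom (alg_k Nv Ar w k) U"
begin

lemma U_in_alg_k: "U \<in> alg_k Nv Ar w k"
  using atom by (simp add: is_atom_def)

lemma atom_minimal: "V \<in> alg_k Nv Ar w k \<Longrightarrow> V \<noteq> {} \<Longrightarrow> V \<subseteq> U \<Longrightarrow> V = U"
  using atom by (simp add: is_atom_def)

lemma U_subset: "U \<subseteq> Nv"
  using U_in_alg_k algebra_alg_k unfolding algebra_iff_Un by blast

lemma atom_in_one_tree:
  assumes G: "G \<in> opt" and u: "u \<in> U" and u': "u' \<in> U"
  shows "root_of G u' = root_of G u"
proof -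
  interpret G: finite_forest G by (rule opt_finite_forest[OF G])
  interpret alg: algebra Nv "alg_k Nv Ar w k" by (rule algebra_alg_k)
  define r where "r = root_of G u"
  have uN: "u \<in> Nv" using u U_subset by blast
  let ?S = "subtree_verts Nv G r"
  have "?S \<in> alg_k Nv Ar w k"
    using subtree_in_alg_k[OF G G.root_of_in_roots[OF opt_subset[OF G] uN]] by (simp add: r_def)
  then have "U \<inter> ?S \<in> alg_k Nv Ar w k" using U_in_alg_k by blast
  moreover have "(u, r) \<in> G\<^sup>*" unfolding r_def by (rule G.root_of_path)
  with u uN have "u \<in> U \<inter> ?S" by simp
  ultimately have "U \<inter> ?S = U" by (intro atom_minimal) auto
  with u' have "(u', r) \<in> G\<^sup>*" by auto
  then show ?thesis using G.root_of_eqI G.root_of_not_Domain by (simp add: r_def)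
qed

lemma atom_separated:
  assumes y: "y \<in> Nv" "y \<notin> U" and u: "u \<in> U"
  shows "\<exists>G\<in>opt. root_of G y \<noteq> root_of G u"
proof (rule ccontr)
  assume "\<not> ?thesis"
  then have same: "\<forall>G\<in>opt. root_of G u = root_of G y" by auto
  define M where
    "M = {S. S \<subseteq> Nv \<and> (\<forall>a\<in>S. \<forall>b\<in>Nv. (\<forall>G\<in>opt. root_of G a = root_of G b) \<longrightarrow> b \<in> S)}"
  have "algebra Nv M"
  proof (rule algebra_iff_Un[THEN iffD2], intro conjI ballI)
    show "M \<subseteq> Pow Nv" "{} \<in> M" unfolding M_def by auto
    show "Nv - a \<in> M" if "a \<in> M" for a
      using that unfolding M_def by (auto simp: Ball_def)
    show "a \<union> b \<in> M" if "a \<in> M" "b \<in> M" for a b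
      using that unfolding M_def by blast
  qed
  moreover have "subtree_verts Nv G r \<in> M" if G: "G \<in> opt" and r: "r \<in> roots Nv G" for G r
  proof -
    interpret G: finite_forest G by (rule opt_finite_forest[OF G])
    have r_sink: "r \<notin> Domain G" using r by (simp add: roots_eq)
    have "b \<in> subtree_verts Nv G r"
      if "a \<in> subtree_verts Nv G r" "b \<in> Nv" "\<forall>G\<in>opt. root_of G a = root_of G b" for a b
    proof -
      have "root_of G a = r" using that(1) G.root_of_eqI[OF _ r_sink] by simp
      then have "root_of G b = r" using that(3) G by simp
      then show ?thesis using that(2) G.root_of_path[of b] by simp
    qed
    then show ?thesis unfolding M_def by auto
  qed
  ultimately have "alg_k Nv Ar w k \<subseteq> M" by (rule alg_k_least)
  then have "U \<in> M" using U_in_alg_k by blast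
  with u y same show False unfolding M_def by blast
qed

lemma in_tails_subset: "K \<in> opt \<Longrightarrow> in_tails U K \<subseteq> Nv"
  using opt_subset unfolding in_tails_def by blast

lemma remove_in_tail:
  assumes K: "K \<in> opt" and bx: "(\<beta>, x) \<in> K" and x: "x \<in> U" and b: "\<beta> \<notin> U"
  shows "\<exists>K'\<in>opt. (\<forall>v. v \<in> U \<or> v \<notin> subtree_verts Nv K \<beta> \<longrightarrow> out_arcs K' v = out_arcs K v)
    \<and> (\<forall>u\<in>U. root_of K' u = root_of K u) \<and> in_tails U K' \<subseteq> in_tails U K - {\<beta>}"
proof -
  interpret K: finite_forest K by (rule opt_finite_forest[OF K])
  have bN: "\<beta> \<in> Nv" using opt_subset[OF K] bx by blast
  obtain H where H: "H \<in> opt" and sep: "root_of H \<beta> \<noteq> root_of H x"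
    using atom_separated[OF bN b x] by blast
  interpret H: finite_forest H by (rule opt_finite_forest[OF H])
  define X where "X = subtree_verts Nv K \<beta> \<inter> {v. root_of H v = root_of H \<beta>}"
  define K' where "K' = graft K H X"
  have K': "K' \<in> opt"
    using graft_subtree_opt[OF K H bx sep[symmetric]] unfolding K'_def X_def by blast
  have U_X: "v \<notin> X" if "v \<in> U" for v
    using atom_in_one_tree[OF H x that] sep by (simp add: X_def)
  have agree: "out_arcs K' v = out_arcs K v" if "v \<notin> X" for v
    using that by (simp add: K'_def out_arcs_graft)
  have "\<beta> \<in> X" using bN by (simp add: X_def)
  have tails: "in_tails U K' \<subseteq> in_tails U K - {\<beta>}"
  proof
    fix v assume "v \<in> in_tails U K'"
    then obtain w where vw: "(v, w) \<in> K'" and w: "w \<in> U" and v: "v \<notin> U"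
      unfolding in_tails_def by blast
    have "v \<notin> X"
    proof
      assume vX: "v \<in> X"
      then have "(v, w) \<in> H" using vw by (simp add: K'_def graft_iff)
      with vX have "root_of H w = root_of H \<beta>" using H.root_of_arc[of v w] by (simp add: X_def)
      with atom_in_one_tree[OF H x w] sep show False by simp
    qed
    with vw have "(v, w) \<in> K" by (simp add: K'_def graft_iff)
    with w v \<open>v \<notin> X\<close> \<open>\<beta> \<in> X\<close> show "v \<in> in_tails U K - {\<beta>}"
      unfolding in_tails_def by blast
  qed
  have "root_of K' x = root_of K x"
  proof (rule root_of_agree[OF opt_finite_forest[OF K] opt_finite_forest[OF K']])
    fix z assume "(x, z) \<in> K\<^sup>*"
    with K.no_path_back[OF bx] have "z \<notin> X" by (auto simp: X_def intro: rtrancl_trans)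
    then show "out_arcs K' z = out_arcs K z" by (rule agree)
  qed
  then have "\<forall>u\<in>U. root_of K' u = root_of K u"
    using atom_in_one_tree[OF K' x] atom_in_one_tree[OF K x] by simp
  moreover have "out_arcs K' v = out_arcs K v" if "v \<in> U \<or> v \<notin> subtree_verts Nv K \<beta>" for v
    using that U_X agree by (auto simp: X_def)
  ultimately show ?thesis using K' tails by blast
qed

lemma in_tail_free_opt:
  assumes F: "F \<in> opt"
  defines "D \<equiv> \<Union>\<beta>\<in>in_tails U F. subtree_verts Nv F \<beta>"
  shows "\<exists>G\<in>opt. in_tails U G = {} \<and> (\<forall>v. v \<in> U \<or> v \<notin> D \<longrightarrow> out_arcs G v = out_arcs F v)
    \<and> (\<forall>u\<in>U. root_of G u = root_of F u)"
proof -
  let ?inv = "\<lambda>K. K \<in> opt \<and> (\<forall>v. v \<in> U \<or> v \<notin> D \<longrightarrow> out_arcs K v = out_arcs F v)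
    \<and> (\<forall>u\<in>U. root_of K u = root_of F u) \<and> in_tails U K \<subseteq> in_tails U F"
  have reduce: "\<exists>G. ?inv G \<and> in_tails U G = {}" if "?inv K" "card (in_tails U K) = n" for K n
    using that
  proof (induction n arbitrary: K rule: less_induct)
    case (less n K)
    show ?case
    proof (cases "in_tails U K = {}")
      case False
      then obtain \<beta> x where \<beta>: "\<beta> \<in> in_tails U K" and bx: "(\<beta>, x) \<in> K" "x \<in> U" "\<beta> \<notin> U"
        unfolding in_tails_def by blast
      obtain K' where K': "K' \<in> opt"
        and agree: "\<forall>v. v \<in> U \<or> v \<notin> subtree_verts Nv K \<beta> \<longrightarrow> out_arcs K' v = out_arcs K v"
        and roots: "\<forall>u\<in>U. root_of K' u = root_of K u"
        and tails: "in_tails U K' \<subseteq> in_tails U K - {\<beta>}"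
        using remove_in_tail[OF _ bx] less.prems(1) by blast
      have "subtree_verts Nv K \<beta> \<subseteq> D"
        unfolding D_def
      proof (rule subtree_within_subtrees[OF opt_subset[OF F]])
        show "\<beta> \<in> in_tails U F" "\<beta> \<in> Nv"
          using \<beta> less.prems(1) in_tails_subset by blast+
        show "(v, u) \<in> F" if "v \<notin> (\<Union>\<beta>\<in>in_tails U F. subtree_verts Nv F \<beta>)" "(v, u) \<in> K" for v u
          using that less.prems(1) by (simp add: D_def out_arcs_eq_iff)
      qed
      have arcs': "\<forall>v. v \<in> U \<or> v \<notin> D \<longrightarrow> out_arcs K' v = out_arcs F v"
      proof (intro allI impI)
        fix v assume v: "v \<in> U \<or> v \<notin> D"
        have "v \<in> U \<or> v \<notin> subtree_verts Nv K \<beta>"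
          using v \<open>subtree_verts Nv K \<beta> \<subseteq> D\<close> by blast
        then have "out_arcs K' v = out_arcs K v" using agree by blast
        moreover have "out_arcs K v = out_arcs F v" using v less.prems(1) by blast
        ultimately show "out_arcs K' v = out_arcs F v" by simp
      qed
      have roots': "\<forall>u\<in>U. root_of K' u = root_of F u" using roots less.prems(1) by simp
      have tails': "in_tails U K' \<subseteq> in_tails U F" using tails less.prems(1) by blast
      have inv': "?inv K'" using K' arcs' roots' tails' by (intro conjI)
      have smaller: "card (in_tails U K') < n"
        unfolding less.prems(2)[symmetric]
      proof (rule psubset_card_mono)
        have "K \<in> opt" using less.prems(1) by blast
        then show "finite (in_tails U K)"
          using finite_subset[OF in_tails_subset finite_Nv] by blast
        show "in_tails U K' \<subset> in_tails U K"
        proof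
          show "in_tails U K' \<subseteq> in_tails U K" using tails by blast
          show "in_tails U K' \<noteq> in_tails U K" using tails \<beta> by blast
        qed
      qed
      show ?thesis using less.IH[OF smaller inv' refl] .
    qed (use less.prems(1) in blast)
  qed
  have "?inv F" using F by simp
  from reduce[OF this refl] show ?thesis by blast
qed

lemma in_tail_free_separated:
  assumes y: "y \<in> Nv" "y \<notin> U" and u: "u \<in> U"
  shows "\<exists>G\<in>opt. in_tails U G = {} \<and> root_of G y \<noteq> root_of G u"
proof -
  obtain H where H: "H \<in> opt" and sep: "root_of H y \<noteq> root_of H u"
    using atom_separated[OF y u] by blast
  interpret H: finite_forest H by (rule opt_finite_forest[OF H])
  define D where "D = (\<Union>\<beta>\<in>in_tails U H. subtree_verts Nv H \<beta>)"
  obtain G where G: "G \<in> opt" "in_tails U G = {}"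
    and arcs: "\<forall>v. v \<in> U \<or> v \<notin> D \<longrightarrow> out_arcs G v = out_arcs H v"
    and roots: "\<forall>u\<in>U. root_of G u = root_of H u"
    using in_tail_free_opt[OF H] unfolding D_def by blast
  have "y \<notin> D"
  proof
    assume "y \<in> D"
    then obtain \<beta> x where "(y, \<beta>) \<in> H\<^sup>*" "(\<beta>, x) \<in> H" "x \<in> U"
      unfolding D_def in_tails_def by auto
    then have "root_of H y = root_of H u"
      using H.root_of_rtrancl H.root_of_arc atom_in_one_tree[OF H u] by metis
    with sep show False ..
  qed
  have "root_of G y = root_of H y"
  proof (rule root_of_agree[OF opt_finite_forest[OF H] opt_finite_forest[OF G(1)]])
    fix z assume "(y, z) \<in> H\<^sup>*"
    have "z \<notin> D"
      unfolding D_def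
      by (rule rtrancl_avoids_subtrees[OF opt_subset[OF H] _ \<open>(y, z) \<in> H\<^sup>*\<close>
            \<open>y \<notin> D\<close>[unfolded D_def]]) simp
    then show "out_arcs G z = out_arcs H z" using arcs by blast
  qed
  with roots u sep G show ?thesis by auto
qed

lemma exit_heads_same_root:
  assumes G: "G \<in> opt" "in_tails U G = {}" and H: "H \<in> opt" "in_tails U H = {}"
    and arc1: "u1 \<in> U" "(u1, y1) \<in> G" "y1 \<notin> U"
    and arc2: "u2 \<in> U" "(u2, y2) \<in> G" "y2 \<notin> U"
  shows "root_of H y1 = root_of H y2"
proof -
  interpret G: finite_forest G by (rule opt_finite_forest[OF G(1)])
  interpret H: finite_forest H by (rule opt_finite_forest[OF H(1)])
  have closed: "y \<notin> U" if "in_tails U K = {}" "(x, y) \<in> K" "x \<notin> U" for K x y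
    using that by (auto simp: in_tails_def)
  have "root_of G u1 \<notin> U"
    using G.root_of_arc[OF arc1(2)] G.root_of_outside_in_tail_free[OF G(2) arc1(3)] by simp
  then have "v \<notin> U" if "v \<in> roots Nv G" for v
    using that atom_in_one_tree[OF G(1) arc1(1)] G.root_of_sink by (fastforce simp: roots_eq)
  then have roots_G: "roots Nv G \<inter> U = {}" by blast
  have roots_H: "roots Nv H \<inter> U \<subseteq> {root_of H u1}"
    using atom_in_one_tree[OF H(1) arc1(1)] H.root_of_sink by (auto simp: roots_eq) metis
  have "acyclic (graft G H U)"
    using G.acyclic_arcs H.acyclic_arcs closed[OF G(2)] by (rule acyclic_graft)
  moreover have "acyclic (graft H G U)"
    using H.acyclic_arcs G.acyclic_arcs closed[OF H(2)] by (rule acyclic_graft)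
  ultimately have "graft G H U \<in> opt \<and> graft H G U \<in> opt"
    by (rule graft_pair_opt[OF G(1) H(1) _ _ roots_G roots_H])
  then have K: "graft H G U \<in> opt" ..
  have outside: "root_of (graft H G U) y = root_of H y" if "y \<notin> U" for y
  proof (rule root_of_agree[OF opt_finite_forest[OF H(1)] opt_finite_forest[OF K]])
    fix z assume "(y, z) \<in> H\<^sup>*"
    with that have "z \<notin> U" using in_tails_empty_rtrancl[OF H(2)] by blast
    then show "out_arcs (graft H G U) z = out_arcs H z" by (simp add: out_arcs_graft)
  qed
  interpret K: finite_forest "graft H G U" by (rule opt_finite_forest[OF K])
  have "root_of (graft H G U) u1 = root_of H y1"
    using K.root_of_arc[of u1 y1] arc1 outside by (simp add: graft_iff)
  moreover have "root_of (graft H G U) u2 = root_of H y2"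
    using K.root_of_arc[of u2 y2] arc2 outside by (simp add: graft_iff)
  ultimately show ?thesis using atom_in_one_tree[OF K arc1(1) arc2(1)] by simp
qed

text \<open>Otherwise grafting \<open>G\<close> onto \<open>H\<close> along the subtree of \<open>ui\<close> keeps \<open>u\<close> in its \<open>H\<close>-tree but
  moves \<open>ui\<close> into the \<open>H\<close>-tree of \<open>yi\<close>, splitting the atom.\<close>

lemma path_into_exit_subtree:
  assumes G: "G \<in> opt" "in_tails U G = {}" and H: "H \<in> opt" "in_tails U H = {}"
    and arc: "ui \<in> U" "(ui, yi) \<in> G" "yi \<notin> U" and sep: "root_of H yi \<noteq> root_of H ui"
    and u: "u \<in> U" "u \<notin> subtree_verts Nv G ui"
  shows "\<exists>c\<in>subtree_verts Nv G ui. (u, c) \<in> H\<^sup>+"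
proof (rule ccontr)
  assume no_path: "\<not> ?thesis"
  interpret H: finite_forest H by (rule opt_finite_forest[OF H(1)])
  define C where "C = subtree_verts Nv G ui"
  have CU: "C \<subseteq> U"
    using in_tails_empty_rtrancl[OF G(2) _ arc(1)] by (auto simp: C_def)
  then have "C = subtree_verts Nv G ui \<inter> {v. root_of H v = root_of H ui}"
    using atom_in_one_tree[OF H(1) arc(1)] by (auto simp: C_def)
  then have L: "graft H G C \<in> opt"
    using graft_subtree_opt[OF G(1) H(1) arc(2) sep] by simp
  interpret L: finite_forest "graft H G C" by (rule opt_finite_forest[OF L])
  have root_u: "root_of (graft H G C) u = root_of H u"
  proof (rule root_of_agree[OF opt_finite_forest[OF H(1)] opt_finite_forest[OF L]])
    fix z assume "(u, z) \<in> H\<^sup>*"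
    then have "z = u \<or> (u, z) \<in> H\<^sup>+" by (metis rtranclD)
    with u(2) no_path have "z \<notin> C" by (auto simp: C_def)
    then show "out_arcs (graft H G C) z = out_arcs H z" by (simp add: out_arcs_graft)
  qed
  have root_yi: "root_of (graft H G C) yi = root_of H yi"
  proof (rule root_of_agree[OF opt_finite_forest[OF H(1)] opt_finite_forest[OF L]])
    fix z assume "(yi, z) \<in> H\<^sup>*"
    with arc(3) have "z \<notin> U" using in_tails_empty_rtrancl[OF H(2)] by blast
    with CU show "out_arcs (graft H G C) z = out_arcs H z" by (auto simp: out_arcs_graft)
  qed
  have "ui \<in> C" using arc(1) U_subset by (auto simp: C_def)
  with arc(2) have "(ui, yi) \<in> graft H G C" by (simp add: graft_iff)
  then have "root_of (graft H G C) ui = root_of (graft H G C) yi" by (rule L.root_of_arc)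
  with root_u root_yi atom_in_one_tree[OF L arc(1) u(1)] have "root_of H u = root_of H yi" by simp
  with sep atom_in_one_tree[OF H(1) arc(1) u(1)] show False by simp
qed

text \<open>For a forest \<open>H\<close> separating the exits from their successors, every vertex of either
  exit subtree has an \<open>H\<close>-path into the other one, which is impossible in a finite acyclic
  relation.\<close>

lemma exits_leaving_unique:
  assumes G: "G \<in> opt" "in_tails U G = {}"
    and arc1: "u1 \<in> U" "(u1, y1) \<in> G" "y1 \<notin> U"
    and arc2: "u2 \<in> U" "(u2, y2) \<in> G" "y2 \<notin> U"
  shows "u1 = u2"
proof (rule ccontr)
  assume ne: "u1 \<noteq> u2"
  interpret G: finite_forest G by (rule opt_finite_forest[OF G(1)])
  have "y1 \<in> Nv" using opt_subset[OF G(1)] arc1(2) by blast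
  then obtain H where H: "H \<in> opt" "in_tails U H = {}" and sep1: "root_of H y1 \<noteq> root_of H u1"
    using in_tail_free_separated[OF _ arc1(3) arc1(1)] by blast
  interpret H: finite_forest H by (rule opt_finite_forest[OF H(1)])
  have sep2: "root_of H y2 \<noteq> root_of H u2"
    using sep1 exit_heads_same_root[OF G H arc1 arc2] atom_in_one_tree[OF H(1) arc1(1) arc2(1)]
    by simp
  define C1 C2 where "C1 = subtree_verts Nv G u1" and "C2 = subtree_verts Nv G u2"
  have disjoint: "C1 \<inter> C2 = {}"
    unfolding C1_def C2_def by (rule G.subtrees_of_leaving_disjoint[OF G(2) arc1 arc2 ne])
  have CU: "C1 \<subseteq> U" "C2 \<subseteq> U"
    using in_tails_empty_rtrancl[OF G(2) _ arc1(1)] in_tails_empty_rtrancl[OF G(2) _ arc2(1)]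
    by (auto simp: C1_def C2_def)
  have "u1 \<in> C1" using arc1(1) U_subset by (auto simp: C1_def)
  then obtain m where m: "m \<in> C1 \<union> C2" and maximal: "\<forall>t\<in>C1 \<union> C2. (m, t) \<notin> H\<^sup>+"
    using finite_acyclic_maximal_reachable[OF H.finite_arcs H.acyclic_arcs, of u1 "C1 \<union> C2"] by blast
  show False
  proof (cases "m \<in> C1")
    case True
    with CU disjoint have "m \<in> U" "m \<notin> C2" by auto
    then have "\<exists>c\<in>C2. (m, c) \<in> H\<^sup>+"
      unfolding C2_def by (rule path_into_exit_subtree[OF G H arc2 sep2])
    then obtain c where "c \<in> C2" "(m, c) \<in> H\<^sup>+" ..
    with maximal show False by blast
  next
    case False
    with m CU have "m \<in> U" "m \<notin> C1" by auto
    then have "\<exists>c\<in>C1. (m, c) \<in> H\<^sup>+"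
      unfolding C1_def by (rule path_into_exit_subtree[OF G H arc1 sep1])
    then obtain c where "c \<in> C1" "(m, c) \<in> H\<^sup>+" ..
    with maximal show False by blast
  qed
qed

lemma exit_unique_in_tail_free:
  assumes G: "G \<in> opt" "in_tails U G = {}" and u1: "u1 \<in> exits U G" and u2: "u2 \<in> exits U G"
  shows "u1 = u2"
proof -
  interpret G: finite_forest G by (rule opt_finite_forest[OF G(1)])
  have leaves: "\<exists>y. (u, y) \<in> G \<and> y \<notin> U" if "u \<in> exits U G" "u \<in> Domain G" for u
    using that by (auto simp: exits_def)
  have sink: "u \<notin> Domain G"
    if u: "u \<in> exits U G" and u': "u' \<in> exits U G" "u' \<notin> Domain G" for u u'
  proof
    assume "u \<in> Domain G"
    then obtain y where "(u, y) \<in> G" "y \<notin> U" using leaves u by blast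
    then have "root_of G u \<notin> U"
      using G.root_of_arc G.root_of_outside_in_tail_free[OF G(2)] by metis
    moreover have "root_of G u = root_of G u'"
      using atom_in_one_tree[OF G(1)] u u'(1) by (simp add: exits_def)
    ultimately show False using u' G.root_of_sink by (simp add: exits_def)
  qed
  show ?thesis
  proof (cases "u1 \<in> Domain G \<and> u2 \<in> Domain G")
    case True
    with leaves u1 u2 obtain y1 y2 where "(u1, y1) \<in> G" "y1 \<notin> U" "(u2, y2) \<in> G" "y2 \<notin> U"
      by blast
    with u1 u2 show ?thesis using exits_leaving_unique[OF G] by (simp add: exits_def)
  next
    case False
    with sink u1 u2 have "u1 \<notin> Domain G" "u2 \<notin> Domain G" by blast+
    with u1 u2 show ?thesis
      using atom_in_one_tree[OF G(1)] G.root_of_sink by (simp add: exits_def) metis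
  qed
qed

lemma exit_unique:
  assumes F: "F \<in> opt" and "u1 \<in> exits U F" "u2 \<in> exits U F"
  shows "u1 = u2"
proof -
  obtain G where G: "G \<in> opt" "in_tails U G = {}"
    and arcs: "\<forall>v\<in>U. out_arcs G v = out_arcs F v"
    using in_tail_free_opt[OF F] by blast
  have "exits U G = exits U F"
    using arcs by (auto simp: exits_def out_arcs_eq_iff)
  with assms show ?thesis using exit_unique_in_tail_free[OF G] by blast
qed

lemma in_tail_subtree_disjoint_atom:
  assumes F: "F \<in> opt" and \<beta>: "\<beta> \<in> in_tails U F"
  shows "subtree_verts Nv F \<beta> \<inter> U = {}"
proof (rule ccontr)
  assume "subtree_verts Nv F \<beta> \<inter> U \<noteq> {}"
  then obtain z where z\<beta>: "(z, \<beta>) \<in> F\<^sup>*" and z: "z \<in> U" by auto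
  from \<beta> obtain x where \<beta>x: "(\<beta>, x) \<in> F" and x: "x \<in> U" and \<beta>U: "\<beta> \<notin> U"
    unfolding in_tails_def by blast
  interpret F: finite_forest F by (rule opt_finite_forest[OF F])
  obtain t t' where "(t, t') \<in> F" "t \<in> U" "t' \<notin> U" and t'\<beta>: "(t', \<beta>) \<in> F\<^sup>*"
    using rtrancl_leaves_set[OF z\<beta> z \<beta>U] by blast
  then have t: "t \<in> exits U F"
    using F.single_valued_arcs by (auto simp: exits_def dest: single_valuedD)
  obtain e where "e \<in> U" and xe: "(x, e) \<in> F\<^sup>*" and "\<forall>s\<in>U. (e, s) \<notin> F\<^sup>+"
    using finite_acyclic_maximal_reachable[OF F.finite_arcs F.acyclic_arcs x] by blast
  then have "e \<in> exits U F" by (auto simp: exits_def)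
  with t have "t = e" by (rule exit_unique[OF F])
  with \<open>(t, t') \<in> F\<close> t'\<beta> \<beta>x xe have "(e, e) \<in> F\<^sup>+"
    by (meson rtrancl_into_trancl2 rtrancl_into_rtrancl rtrancl_trans)
  with F.acyclic_arcs show False unfolding acyclic_def by blast
qed

lemma in_tail_subtrees_disjoint:
  assumes F: "F \<in> opt" and "\<beta> \<in> in_tails U F" "\<gamma> \<in> in_tails U F" "\<beta> \<noteq> \<gamma>"
  shows "subtree_verts Nv F \<beta> \<inter> subtree_verts Nv F \<gamma> = {}"
proof -
  interpret F: finite_forest F by (rule opt_finite_forest[OF F])
  have no_path: "(a, c) \<notin> F\<^sup>*" if a: "a \<in> in_tails U F" and c: "c \<in> in_tails U F" "a \<noteq> c" for a c
  proof
    assume "(a, c) \<in> F\<^sup>*"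
    obtain y where ay: "(a, y) \<in> F" and y: "y \<in> U" using a by (auto simp: in_tails_def)
    have "(y, c) \<in> F\<^sup>*" using \<open>(a, c) \<in> F\<^sup>*\<close> c(2) ay by (rule F.rtrancl_via_successor)
    moreover have "y \<in> Nv" using opt_subset[OF F] ay by blast
    ultimately have "y \<in> subtree_verts Nv F c \<inter> U" using y by simp
    with in_tail_subtree_disjoint_atom[OF F c(1)] show False by blast
  qed
  show ?thesis
  proof (rule ccontr)
    assume "subtree_verts Nv F \<beta> \<inter> subtree_verts Nv F \<gamma> \<noteq> {}"
    then obtain v where "(v, \<beta>) \<in> F\<^sup>*" "(v, \<gamma>) \<in> F\<^sup>*" by auto
    then have "(\<beta>, \<gamma>) \<in> F\<^sup>* \<or> (\<gamma>, \<beta>) \<in> F\<^sup>*"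
      by (rule single_valued_confluent[OF F.single_valued_arcs])
    with no_path assms(2-4) show False by blast
  qed
qed

end

theorem proposition2:
  fixes Nv :: "'a set" and Ar :: "('a \<times> 'a) set" and w :: "'a \<times> 'a \<Rightarrow> real"
    and k :: nat and F :: "('a \<times> 'a) set" and U :: "'a set"
  assumes "wdigraph Nv Ar"
    and "forests_k Nv Ar 1 \<noteq> {}"
    and "1 \<le> k" and "k \<le> card Nv - 1"
    and "phi Nv Ar w (k - 1) - phi Nv Ar w k > phi Nv Ar w k - phi Nv Ar w (k + 1)"
    and "F \<in> opt_forests Nv Ar w k"
    and "is_atom (alg_k Nv Ar w k) U"
  defines "D \<equiv> (\<Union>\<beta>\<in>in_tails U F. subtree_verts Nv F \<beta>)"
  shows "D \<inter> U = {} \<and>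
         (\<forall>\<beta>\<in>in_tails U F. \<forall>\<gamma>\<in>in_tails U F. \<beta> \<noteq> \<gamma> \<longrightarrow>
           subtree_verts Nv F \<beta> \<inter> subtree_verts Nv F \<gamma> = {}) \<and>
         (\<exists>G\<in>opt_forests Nv Ar w k. (\<forall>v\<in>Nv - D. out_arcs G v = out_arcs F v) \<and> in_tails U G = {})"
proof -
  have "Nv \<noteq> {}" using assms(3,4) by auto
  then interpret atom_setting Nv Ar w k U
    using assms(1,3,5,7) by unfold_locales
  obtain G where "G \<in> opt" "in_tails U G = {}" and "\<forall>v. v \<notin> D \<longrightarrow> out_arcs G v = out_arcs F v"
    using in_tail_free_opt[OF assms(6)] unfolding D_def by blast
  then have "\<exists>G\<in>opt. (\<forall>v\<in>Nv - D. out_arcs G v = out_arcs F v) \<and> in_tails U G = {}"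
    by blast
  moreover have "D \<inter> U = {}"
    using in_tail_subtree_disjoint_atom[OF assms(6)] unfolding D_def by blast
  ultimately show ?thesis
    using in_tail_subtrees_disjoint[OF assms(6)] by blast
qed

end
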